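(* Let $n\ge 3$ and for $i=1,2$ let $f_i(x,y_0,\dots,y_n)$ be smooth with $\frac{\partial^2 f_i}{\partial y_n^2}\neq0$, and let $D_i$ be the rank 2 distribution on (an open subset of) $J^n(\mathbb R,\mathbb R)\times\mathbb R$ spanned by $\frac{\partial}{\partial x}+\sum_{k=0}^{n-1}y_{k+1}\frac{\partial}{\partial y_k}+f_i\frac{\partial}{\partial z}$ and $\frac{\partial}{\partial y_n}$. Let $\phi$ be a local diffeomorphism with $\phi_*D_1=D_2$ of the form $$\phi(p,z)=(\psi(p),\ \alpha z+\mu(p)),\qquad p\in J^n(\mathbb R,\mathbb R),$$ where $\psi$ is a local diffeomorphism of $J^n(\mathbb R,\mathbb R)$, $\alpha\in\mathbb R\setminus\{0\}$ and $\mu$ is a smooth function on $J^n(\mathbb R,\mathbb R)$. Then $\psi$ is a contact transformation of $J^n(\mathbb R,\mathbb R)$, and $\mu$ does not depend on $y_n$ (i.e. $\mu$ is the pull-back of a function on $J^{n-1}(\mathbb R,\mathbb R)$).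
   Context: Coordinates on $J^n(\mathbb R,\mathbb R)$ are $(x,y_0,\dots,y_n)$. A contact transformation of $J^n(\mathbb R,\mathbb R)$ is a (local) diffeomorphism preserving the contact (Cartan) distribution $\{\theta_0=\dots=\theta_{n-1}=0\}$, where $\theta_k=dy_k-y_{k+1}\,dx$. *)

theory Defs
  imports "HOL-Analysis.Analysis"
begin

text \<open>Points of J^n(R,R) are pairs (x, y) with x :: real and y :: real^'n, where
  the coordinates y_0, ..., y_n are y $ e 0, ..., y $ e n for a fixed bijection
  e : {0..n} -> 'n (so CARD('n) = n+1).\<close>

fun Ck_on :: "nat \<Rightarrow> 'a::real_normed_vector set \<Rightarrow> ('a \<Rightarrow> 'b::real_normed_vector) \<Rightarrow> bool" where
  "Ck_on 0 S f = continuous_on S f"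
| "Ck_on (Suc k) S f =
     (\<exists>f'. (\<forall>x\<in>S. (f has_derivative f' x) (at x)) \<and> (\<forall>v. Ck_on k S (\<lambda>x. f' x v)))"

definition smooth_on :: "'a::real_normed_vector set \<Rightarrow> ('a \<Rightarrow> 'b::real_normed_vector) \<Rightarrow> bool" where
  "smooth_on S f \<longleftrightarrow> (\<forall>k. Ck_on k S f)"

definition local_diffeo_on :: "'a::euclidean_space set \<Rightarrow> ('a \<Rightarrow> 'a) \<Rightarrow> bool" where
  "local_diffeo_on S g \<longleftrightarrow> open S \<and> smooth_on S g \<and> (\<forall>x\<in>S. bij (frechet_derivative g (at x)))"

definition pderiv_dir :: "'a::real_normed_vector \<Rightarrow> ('a \<Rightarrow> 'b::real_normed_vector) \<Rightarrow> 'a \<Rightarrow> 'b" where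
  "pderiv_dir v f p = frechet_derivative f (at p) v"

definition dyn :: "(nat \<Rightarrow> 'n::finite) \<Rightarrow> nat \<Rightarrow> real \<times> (real^'n)" where
  "dyn e n = (0, axis (e n) 1)"

text \<open>Total derivative part d/dx + sum_{k<n} y_{k+1} d/dy_k at p = (x,y).\<close>
definition totder :: "(nat \<Rightarrow> 'n::finite) \<Rightarrow> nat \<Rightarrow> real \<times> (real^'n) \<Rightarrow> real \<times> (real^'n)" where
  "totder e n p = (1, \<chi> j. (let k = inv_into {..n} e j in if k < n then (snd p) $ e (Suc k) else 0))"

definition Xfield :: "(nat \<Rightarrow> 'n::finite) \<Rightarrow> nat \<Rightarrow> (real \<times> (real^'n) \<Rightarrow> real)
     \<Rightarrow> (real \<times> (real^'n)) \<times> real \<Rightarrow> (real \<times> (real^'n)) \<times> real" where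
  "Xfield e n f q = (totder e n (fst q), f (fst q))"

definition Yfield :: "(nat \<Rightarrow> 'n::finite) \<Rightarrow> nat \<Rightarrow> (real \<times> (real^'n)) \<times> real" where
  "Yfield e n = (dyn e n, 0)"

definition Dist :: "(nat \<Rightarrow> 'n::finite) \<Rightarrow> nat \<Rightarrow> (real \<times> (real^'n) \<Rightarrow> real)
     \<Rightarrow> (real \<times> (real^'n)) \<times> real \<Rightarrow> ((real \<times> (real^'n)) \<times> real) set" where
  "Dist e n f q = span {Xfield e n f q, Yfield e n}"

text \<open>Contact (Cartan) distribution at p = (x,y): theta_k = dy_k - y_{k+1} dx = 0 for k < n.\<close>
definition contact_dist :: "(nat \<Rightarrow> 'n::finite) \<Rightarrow> nat \<Rightarrow> real \<times> (real^'n) \<Rightarrow> (real \<times> (real^'n)) set" where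
  "contact_dist e n p = {(dx, dy). \<forall>k<n. dy $ e k = (snd p) $ e (Suc k) * dx}"

definition contact_transformation_on ::
    "(nat \<Rightarrow> 'n::finite) \<Rightarrow> nat \<Rightarrow> (real \<times> (real^'n)) set \<Rightarrow> (real \<times> (real^'n) \<Rightarrow> real \<times> (real^'n)) \<Rightarrow> bool" where
  "contact_transformation_on e n V \<psi> \<longleftrightarrow> local_diffeo_on V \<psi> \<and>
     (\<forall>p\<in>V. frechet_derivative \<psi> (at p) ` contact_dist e n p = contact_dist e n (\<psi> p))"

end

theory Submission
  imports Defs
begin

text \<open>Projecting \<open>\<phi>\<^sub>*D\<^sub>1 = D\<^sub>2\<close> to \<open>J\<^sup>n\<close> shows that \<open>d\<psi>\<close> maps the contact
  distribution \<open>span {D, \<partial>/\<partial>y\<^sub>n}\<close> onto itself, where \<open>D\<close> is the truncated total derivative;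
  so \<open>\<psi>\<close> is contact. With \<open>X = x \<circ> \<psi>\<close> and \<open>Y\<^sub>k = y\<^sub>k \<circ> \<psi>\<close> this says
  \<open>D Y\<^sub>k = Y\<^sub>k\<^sub>+\<^sub>1 D X\<close> and \<open>\<partial>\<^sub>n Y\<^sub>k = Y\<^sub>k\<^sub>+\<^sub>1 \<partial>\<^sub>n X\<close> for \<open>k < n\<close>.
  Differentiating these crosswise, using \<open>[\<partial>\<^sub>n, D] = \<partial>\<^sub>n\<^sub>-\<^sub>1\<close> and the symmetry of second
  derivatives, gives \<open>\<partial>\<^sub>n X \<cdot> W = 0\<close> with \<open>W = \<partial>\<^sub>n Y\<^sub>n \<cdot> D X - D Y\<^sub>n \<cdot> \<partial>\<^sub>n X\<close> (this needs
  \<open>n \<ge> 2\<close>). If \<open>\<partial>\<^sub>n X \<noteq> 0\<close>, then \<open>W = 0\<close> and \<open>d\<psi>\<close> would annihilate the nonzero vector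
  \<open>\<partial>\<^sub>n X \<cdot> D - D X \<cdot> \<partial>\<^sub>n\<close>. Hence \<open>d\<psi>(\<partial>\<^sub>n)\<close> has no \<open>\<partial>\<^sub>x\<close> component, so
  \<open>\<phi>\<^sub>*(\<partial>\<^sub>n) \<in> D\<^sub>2\<close> is a multiple of \<open>\<partial>\<^sub>n\<close> alone and its \<open>\<partial>\<^sub>z\<close> component \<open>\<partial>\<^sub>n \<mu>\<close>
  vanishes.\<close>

lemma frechet_derivative_transform_open:
  assumes "open V" "p \<in> V" "\<forall>q\<in>V. F q = G q"
  shows "frechet_derivative F (at p) = frechet_derivative G (at p)"
proof -
  have "(F has_derivative D) (at p) \<longleftrightarrow> (G has_derivative D) (at p)" for D
    using has_derivative_transform_within_open[of F D p UNIV V G]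
      has_derivative_transform_within_open[of G D p UNIV V F] assms by auto
  then show ?thesis unfolding frechet_derivative_def by simp
qed

lemma pderiv_dir_transform_open:
  assumes "open V" "p \<in> V" "\<forall>q\<in>V. F q = G q"
  shows "pderiv_dir v F p = pderiv_dir v G p"
  using frechet_derivative_transform_open[OF assms] by (simp add: pderiv_dir_def)

lemma Ck_on_cong_open:
  assumes "Ck_on k V f" "open V" "\<forall>x\<in>V. f x = g x"
  shows "Ck_on k V g"
  using assms
proof (induction k arbitrary: f g)
  case 0
  then show ?case using continuous_on_cong by force
next
  case (Suc k)
  then obtain f' where f': "\<forall>x\<in>V. (f has_derivative f' x) (at x)" "\<forall>v. Ck_on k V (\<lambda>x. f' x v)"
    by auto
  have "\<forall>x\<in>V. (g has_derivative f' x) (at x)"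
    using f'(1) Suc.prems has_derivative_transform_within_open by metis
  then show ?case using f'(2) by auto
qed

lemma Ck_on_pderiv_dir:
  assumes "open V" "Ck_on (Suc k) V f"
  shows "Ck_on k V (pderiv_dir v f)"
proof -
  obtain f' where f': "\<forall>x\<in>V. (f has_derivative f' x) (at x)" "\<forall>v. Ck_on k V (\<lambda>x. f' x v)"
    using assms by auto
  have "\<forall>x\<in>V. f' x v = pderiv_dir v f x"
    using f'(1) frechet_derivative_at unfolding pderiv_dir_def by metis
  then show ?thesis using Ck_on_cong_open f'(2) assms(1) by blast
qed

lemma smooth_on_pderiv_dir:
  assumes "open V" "smooth_on V f"
  shows "smooth_on V (pderiv_dir v f)"
  using assms Ck_on_pderiv_dir unfolding smooth_on_def by blast

lemma smooth_on_has_derivative: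
  assumes "smooth_on V f" "p \<in> V"
  shows "(f has_derivative frechet_derivative f (at p)) (at p)"
proof -
  have "Ck_on (Suc 0) V f" using assms unfolding smooth_on_def by blast
  then obtain f' where "\<forall>x\<in>V. (f has_derivative f' x) (at x)" by auto
  then show ?thesis using assms(2) frechet_derivative_at by metis
qed

lemma smooth_on_differentiable:
  assumes "smooth_on V f" "p \<in> V"
  shows "f differentiable (at p)"
  using smooth_on_has_derivative[OF assms] differentiable_def by blast

lemma smooth_on_linear_frechet_derivative:
  assumes "smooth_on V f" "p \<in> V"
  shows "linear (frechet_derivative f (at p))"
  using smooth_on_has_derivative[OF assms] has_derivative_linear by blast

lemma smooth_on_imp_continuous_on:
  assumes "smooth_on V f"
  shows "continuous_on V f"
  using assms unfolding smooth_on_def by (metis Ck_on.simps(1))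

lemma Ck_on_compose_bounded_linear:
  assumes "bounded_linear l" "Ck_on k V f"
  shows "Ck_on k V (\<lambda>x. l (f x))"
  using assms(2)
proof (induction k arbitrary: f)
  case 0
  then show ?case
    using continuous_on_compose[of V f l] linear_continuous_on[OF assms(1)]
    by (simp add: o_def)
next
  case (Suc k)
  then obtain f' where f': "\<forall>x\<in>V. (f has_derivative f' x) (at x)" "\<forall>v. Ck_on k V (\<lambda>x. f' x v)"
    by auto
  have "\<forall>x\<in>V. ((\<lambda>x. l (f x)) has_derivative (\<lambda>h. l (f' x h))) (at x)"
    using f'(1) bounded_linear.has_derivative[OF assms(1)] by blast
  then show ?case using f'(2) Suc.IH by auto
qed

lemma smooth_on_compose_bounded_linear:
  assumes "bounded_linear l" "smooth_on V f"
  shows "smooth_on V (\<lambda>x. l (f x))"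
  using assms Ck_on_compose_bounded_linear unfolding smooth_on_def by blast

lemma pderiv_dir_compose_bounded_linear:
  assumes "bounded_linear l" "f differentiable (at p)"
  shows "pderiv_dir v (\<lambda>q. l (f q)) p = l (pderiv_dir v f p)"
proof -
  have "((\<lambda>q. l (f q)) has_derivative (\<lambda>h. l (frechet_derivative f (at p) h))) (at p)"
    using bounded_linear.has_derivative[OF assms(1)] assms(2) frechet_derivative_works by blast
  from frechet_derivative_at[OF this, symmetric] show ?thesis by (simp add: pderiv_dir_def)
qed

lemma pderiv_dir_product_rule_on:
  fixes f g h :: "'a::real_normed_vector \<Rightarrow> real"
  assumes "open V" "p \<in> V" "\<forall>q\<in>V. f q = g q * h q"
    and "g differentiable (at p)" "h differentiable (at p)"
  shows "pderiv_dir v f p = g p * pderiv_dir v h p + pderiv_dir v g p * h p"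
proof -
  have "((\<lambda>q. g q * h q) has_derivative
      (\<lambda>w. g p * frechet_derivative h (at p) w + frechet_derivative g (at p) w * h p)) (at p)"
    using assms(4,5) frechet_derivative_works has_derivative_mult by blast
  from frechet_derivative_at[OF this, symmetric]
  have "pderiv_dir v (\<lambda>q. g q * h q) p = g p * pderiv_dir v h p + pderiv_dir v g p * h p"
    by (simp add: pderiv_dir_def)
  then show ?thesis using pderiv_dir_transform_open[OF assms(1-3)] by simp
qed

lemma has_real_derivative_along_line:
  fixes g :: "'a::real_normed_vector \<Rightarrow> real"
  assumes "g differentiable (at (a + s *\<^sub>R w))"
  shows "((\<lambda>t. g (a + t *\<^sub>R w)) has_real_derivative pderiv_dir w g (a + s *\<^sub>R w)) (at s)"
proof -
  let ?G = "frechet_derivative g (at (a + s *\<^sub>R w))"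
  have g: "(g has_derivative ?G) (at (a + s *\<^sub>R w))"
    using assms frechet_derivative_works by blast
  have "((\<lambda>t. a + t *\<^sub>R w) has_derivative (\<lambda>h. h *\<^sub>R w)) (at s)"
    by (auto intro!: derivative_eq_intros)
  from has_derivative_compose[OF this g]
  have "((\<lambda>t. g (a + t *\<^sub>R w)) has_derivative (\<lambda>h. ?G (h *\<^sub>R w))) (at s)" by simp
  moreover have "(\<lambda>h. ?G (h *\<^sub>R w)) = (\<lambda>h. pderiv_dir w g (a + s *\<^sub>R w) * h)"
    using linear_scale[OF has_derivative_linear[OF g]] by (auto simp: pderiv_dir_def)
  ultimately show ?thesis unfolding has_field_derivative_def by simp
qed

lemma second_difference_mean_value:
  fixes g :: "'a::real_normed_vector \<Rightarrow> real"
  assumes V: "open V" and sm: "smooth_on V g" and s: "s > 0"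
    and inV: "\<forall>\<sigma>\<in>{0..s}. \<forall>\<tau>\<in>{0..s}. p + \<sigma> *\<^sub>R u + \<tau> *\<^sub>R v \<in> V"
  shows "\<exists>\<sigma> \<tau>. 0 < \<sigma> \<and> \<sigma> < s \<and> 0 < \<tau> \<and> \<tau> < s \<and>
    g (p + s *\<^sub>R u + s *\<^sub>R v) - g (p + s *\<^sub>R u) - g (p + s *\<^sub>R v) + g p
      = s * s * pderiv_dir v (pderiv_dir u g) (p + \<sigma> *\<^sub>R u + \<tau> *\<^sub>R v)"
proof -
  define \<phi> where "\<phi> = (\<lambda>\<sigma>. g ((p + s *\<^sub>R v) + \<sigma> *\<^sub>R u) - g (p + \<sigma> *\<^sub>R u))"
  have "DERIV \<phi> \<sigma> :> pderiv_dir u g ((p + s *\<^sub>R v) + \<sigma> *\<^sub>R u) - pderiv_dir u g (p + \<sigma> *\<^sub>R u)"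
    if "0 \<le> \<sigma>" "\<sigma> \<le> s" for \<sigma>
  proof -
    have "(p + s *\<^sub>R v) + \<sigma> *\<^sub>R u \<in> V"
      using inV[rule_format, of \<sigma> s] that s by (simp add: algebra_simps)
    moreover have "p + \<sigma> *\<^sub>R u \<in> V"
      using inV[rule_format, of \<sigma> 0] that s by simp
    ultimately show ?thesis unfolding \<phi>_def
      by (intro DERIV_diff has_real_derivative_along_line smooth_on_differentiable[OF sm])
  qed
  from MVT2[OF s this] obtain \<sigma> where \<sigma>: "0 < \<sigma>" "\<sigma> < s"
    "\<phi> s - \<phi> 0 = s * (pderiv_dir u g ((p + s *\<^sub>R v) + \<sigma> *\<^sub>R u) - pderiv_dir u g (p + \<sigma> *\<^sub>R u))"
    by auto
  define \<theta> where "\<theta> = (\<lambda>\<tau>. pderiv_dir u g ((p + \<sigma> *\<^sub>R u) + \<tau> *\<^sub>R v))"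
  have "DERIV \<theta> \<tau> :> pderiv_dir v (pderiv_dir u g) ((p + \<sigma> *\<^sub>R u) + \<tau> *\<^sub>R v)"
    if "0 \<le> \<tau>" "\<tau> \<le> s" for \<tau>
    unfolding \<theta>_def using inV[rule_format, of \<sigma> \<tau>] that \<sigma>
    by (intro has_real_derivative_along_line
        smooth_on_differentiable[OF smooth_on_pderiv_dir[OF V sm]]) simp
  from MVT2[OF s this] obtain \<tau> where \<tau>: "0 < \<tau>" "\<tau> < s"
    "\<theta> s - \<theta> 0 = s * pderiv_dir v (pderiv_dir u g) ((p + \<sigma> *\<^sub>R u) + \<tau> *\<^sub>R v)"
    by auto
  have "\<phi> s - \<phi> 0 = g (p + s *\<^sub>R u + s *\<^sub>R v) - g (p + s *\<^sub>R u) - g (p + s *\<^sub>R v) + g p"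
    unfolding \<phi>_def by (simp add: algebra_simps)
  moreover have "pderiv_dir u g ((p + s *\<^sub>R v) + \<sigma> *\<^sub>R u) - pderiv_dir u g (p + \<sigma> *\<^sub>R u)
      = \<theta> s - \<theta> 0"
    unfolding \<theta>_def by (simp add: algebra_simps)
  ultimately show ?thesis
    using \<sigma> \<tau> by (intro exI[of _ \<sigma>] exI[of _ \<tau>]) (simp add: algebra_simps)
qed

lemma small_parallelogram_in_ball:
  fixes p u v :: "'a::real_normed_vector"
  assumes "\<delta> > 0"
  obtains s where "s > 0" "\<forall>\<sigma>\<in>{0..s}. \<forall>\<tau>\<in>{0..s}. p + \<sigma> *\<^sub>R u + \<tau> *\<^sub>R v \<in> ball p \<delta>"
proof
  define c where "c = norm u + norm v + 1"
  have c: "c > 0" unfolding c_def by (simp add: add_nonneg_pos)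
  show s: "\<delta> / (2 * c) > 0" using assms c by simp
  show "\<forall>\<sigma>\<in>{0..\<delta> / (2 * c)}. \<forall>\<tau>\<in>{0..\<delta> / (2 * c)}. p + \<sigma> *\<^sub>R u + \<tau> *\<^sub>R v \<in> ball p \<delta>"
  proof (intro ballI)
    fix \<sigma> \<tau> assume \<sigma>: "\<sigma> \<in> {0..\<delta> / (2 * c)}" and \<tau>: "\<tau> \<in> {0..\<delta> / (2 * c)}"
    have "dist (p + \<sigma> *\<^sub>R u + \<tau> *\<^sub>R v) p \<le> \<sigma> * norm u + \<tau> * norm v"
      using \<sigma> \<tau> norm_triangle_ineq[of "\<sigma> *\<^sub>R u" "\<tau> *\<^sub>R v"] by (simp add: dist_norm add.assoc)
    also have "\<dots> \<le> \<delta> / (2 * c) * norm u + \<delta> / (2 * c) * norm v"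
      using \<sigma> \<tau> by (intro add_mono mult_right_mono) auto
    also have "\<dots> = \<delta> / (2 * c) * (norm u + norm v)"
      by (simp add: distrib_left)
    also have "\<dots> < \<delta> / (2 * c) * c"
      using s unfolding c_def by (intro mult_strict_left_mono) auto
    also have "\<dots> < \<delta>" using c assms by simp
    finally show "p + \<sigma> *\<^sub>R u + \<tau> *\<^sub>R v \<in> ball p \<delta>" by (simp add: dist_commute)
  qed
qed

lemma pderiv_dir_commute:
  fixes g :: "'a::real_normed_vector \<Rightarrow> real"
  assumes V: "open V" "p \<in> V" and sm: "smooth_on V g"
  shows "pderiv_dir u (pderiv_dir v g) p = pderiv_dir v (pderiv_dir u g) p"
proof (rule ccontr)
  define A where "A = pderiv_dir u (pderiv_dir v g)"
  define B where "B = pderiv_dir v (pderiv_dir u g)"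
  assume "pderiv_dir u (pderiv_dir v g) p \<noteq> pderiv_dir v (pderiv_dir u g) p"
  then have \<epsilon>: "\<bar>A p - B p\<bar> / 2 > 0" unfolding A_def B_def by simp
  have cA: "continuous (at p) A" and cB: "continuous (at p) B"
    using smooth_on_imp_continuous_on[OF smooth_on_pderiv_dir[OF V(1) smooth_on_pderiv_dir[OF V(1) sm]]] V
    unfolding A_def B_def by (simp_all add: continuous_on_eq_continuous_at)
  obtain dA where dA: "dA > 0" "\<forall>q. dist q p < dA \<longrightarrow> dist (A q) (A p) < \<bar>A p - B p\<bar> / 2"
    using cA \<epsilon> unfolding continuous_at_eps_delta by blast
  obtain dB where dB: "dB > 0" "\<forall>q. dist q p < dB \<longrightarrow> dist (B q) (B p) < \<bar>A p - B p\<bar> / 2"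
    using cB \<epsilon> unfolding continuous_at_eps_delta by blast
  obtain r where r: "r > 0" "ball p r \<subseteq> V"
    using V openE by blast
  have "min r (min dA dB) > 0" using r dA dB by simp
  then obtain s where s: "s > 0"
    and near: "\<forall>\<sigma>\<in>{0..s}. \<forall>\<tau>\<in>{0..s}. p + \<sigma> *\<^sub>R u + \<tau> *\<^sub>R v \<in> ball p (min r (min dA dB))"
    by (rule small_parallelogram_in_ball)
  have inV1: "\<forall>\<sigma>\<in>{0..s}. \<forall>\<tau>\<in>{0..s}. p + \<sigma> *\<^sub>R u + \<tau> *\<^sub>R v \<in> V"
    using near r by auto
  then have inV2: "\<forall>\<sigma>\<in>{0..s}. \<forall>\<tau>\<in>{0..s}. p + \<sigma> *\<^sub>R v + \<tau> *\<^sub>R u \<in> V"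
    by (metis add.assoc add.commute)
  obtain \<sigma>1 \<tau>1 where 1: "0 < \<sigma>1" "\<sigma>1 < s" "0 < \<tau>1" "\<tau>1 < s"
    "g (p + s *\<^sub>R u + s *\<^sub>R v) - g (p + s *\<^sub>R u) - g (p + s *\<^sub>R v) + g p
      = s * s * B (p + \<sigma>1 *\<^sub>R u + \<tau>1 *\<^sub>R v)"
    using second_difference_mean_value[OF V(1) sm s inV1] unfolding B_def by blast
  obtain \<sigma>2 \<tau>2 where 2: "0 < \<sigma>2" "\<sigma>2 < s" "0 < \<tau>2" "\<tau>2 < s"
    "g (p + s *\<^sub>R v + s *\<^sub>R u) - g (p + s *\<^sub>R v) - g (p + s *\<^sub>R u) + g p
      = s * s * A (p + \<sigma>2 *\<^sub>R v + \<tau>2 *\<^sub>R u)"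
    using second_difference_mean_value[OF V(1) sm s inV2] unfolding A_def by blast
  have "s * s * B (p + \<sigma>1 *\<^sub>R u + \<tau>1 *\<^sub>R v) = s * s * A (p + \<tau>2 *\<^sub>R u + \<sigma>2 *\<^sub>R v)"
    using 1(5) 2(5) by (simp add: algebra_simps)
  then have eqAB: "B (p + \<sigma>1 *\<^sub>R u + \<tau>1 *\<^sub>R v) = A (p + \<tau>2 *\<^sub>R u + \<sigma>2 *\<^sub>R v)"
    using s by simp
  have n1: "dist (p + \<sigma>1 *\<^sub>R u + \<tau>1 *\<^sub>R v) p < dB"
    and n2: "dist (p + \<tau>2 *\<^sub>R u + \<sigma>2 *\<^sub>R v) p < dA"
    using near 1 2 by (auto simp: dist_commute)
  show False
    using dA(2)[rule_format, OF n2] dB(2)[rule_format, OF n1] eqAB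
    by (simp add: dist_real_def) (smt (verit))
qed

lemma has_derivative_fibrewise_affine:
  assumes "(\<psi> has_derivative \<psi>') (at p)" "(\<mu> has_derivative \<mu>') (at p)"
  shows "((\<lambda>(p, z). (\<psi> p, \<alpha> * z + \<mu> p)) has_derivative
          (\<lambda>(v, w). (\<psi>' v, \<alpha> * w + \<mu>' v))) (at (p, z::real))"
proof -
  have "((\<lambda>x. \<psi> (fst x)) has_derivative (\<lambda>h. \<psi>' (fst h))) (at (p, z))"
    "((\<lambda>x. \<mu> (fst x)) has_derivative (\<lambda>h. \<mu>' (fst h))) (at (p, z))"
    using has_derivative_compose[OF bounded_linear_imp_has_derivative[OF bounded_linear_fst]] assms
    by auto
  then have "((\<lambda>x. (\<psi> (fst x), \<alpha> * snd x + \<mu> (fst x))) has_derivative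
      (\<lambda>h. (\<psi>' (fst h), \<alpha> * snd h + \<mu>' (fst h)))) (at (p, z))"
    by (intro has_derivative_Pair has_derivative_add has_derivative_mult_right
        bounded_linear_imp_has_derivative[OF bounded_linear_snd])
  then show ?thesis by (simp add: case_prod_beta')
qed

lemma snd_eq_0_of_mem_span_pair:
  fixes t d v :: "real \<times> 'a::real_vector" and a c :: real
  assumes "(v, c) \<in> span {(t, a), (d, 0)}" "fst t = 1" "fst d = 0" "fst v = 0"
  shows "c = 0"
proof -
  obtain x y where "(v, c) = x *\<^sub>R (t, a) + y *\<^sub>R (d, 0)"
    using assms(1) unfolding span_insert span_singleton by (auto simp: algebra_simps)
  then have "fst v = x" "c = x * a" using assms(2,3) by (auto simp: prod_eq_iff)
  then show ?thesis using assms(4) by simp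
qed

definition partial_y :: "(nat \<Rightarrow> 'n::finite) \<Rightarrow> nat \<Rightarrow> real \<times> (real^'n)" where
  "partial_y e k = (0, axis (e k) 1)"

definition total_deriv :: "(nat \<Rightarrow> 'n::finite) \<Rightarrow> nat \<Rightarrow> (real \<times> (real^'n) \<Rightarrow> real)
    \<Rightarrow> real \<times> (real^'n) \<Rightarrow> real" where
  "total_deriv e n g q = pderiv_dir (totder e n q) g q"

lemma contact_map_component_relation:
  fixes \<psi> :: "real \<times> (real^'n::finite) \<Rightarrow> real \<times> (real^'n)"
  assumes "\<psi> differentiable (at q)"
    and "frechet_derivative \<psi> (at q) v \<in> contact_dist e n (\<psi> q)" and "k < n"
  shows "pderiv_dir v (\<lambda>q. snd (\<psi> q) $ e k) q = snd (\<psi> q) $ e (Suc k) * pderiv_dir v (\<lambda>q. fst (\<psi> q)) q"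
proof -
  have "pderiv_dir v (\<lambda>q. snd (\<psi> q) $ e k) q = snd (pderiv_dir v \<psi> q) $ e k"
    using pderiv_dir_compose_bounded_linear[OF
        bounded_linear_compose[OF bounded_linear_vec_nth bounded_linear_snd] assms(1)]
    by simp
  moreover have "pderiv_dir v (\<lambda>q. fst (\<psi> q)) q = fst (pderiv_dir v \<psi> q)"
    using pderiv_dir_compose_bounded_linear[OF bounded_linear_fst assms(1)] .
  ultimately show ?thesis
    using assms(2,3) unfolding contact_dist_def pderiv_dir_def by (simp add: split_beta)
qed

context
  fixes e :: "nat \<Rightarrow> 'n::finite" and n :: nat
  assumes bij: "bij_betw e {..n} UNIV"
begin

lemma e_eq_iff: "k \<le> n \<Longrightarrow> j \<le> n \<Longrightarrow> e k = e j \<longleftrightarrow> k = j"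
  using bij unfolding bij_betw_def inj_on_def by auto

lemma ex_index_e: "\<exists>k\<le>n. i = e k"
  using bij unfolding bij_betw_def by auto

lemma inv_into_e: "k \<le> n \<Longrightarrow> inv_into {..n} e (e k) = k"
  using bij unfolding bij_betw_def by (simp add: inv_into_f_f)

lemma totder_eq_sum:
  "totder e n q = (1, 0) + (\<Sum>j<n. (snd q $ e (Suc j)) *\<^sub>R partial_y e j)"
proof -
  have "snd (totder e n q) $ i = snd ((1::real, 0::real^'n) + (\<Sum>j<n. (snd q $ e (Suc j)) *\<^sub>R partial_y e j)) $ i" for i
  proof -
    obtain k where k: "k \<le> n" "i = e k" using ex_index_e by blast
    have "(\<Sum>j<n. (snd q $ e (Suc j)) * (axis (e j) (1::real) $ e k))
        = (\<Sum>j<n. if j = k then snd q $ e (Suc j) else 0)"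
      using k(1) by (intro sum.cong) (auto simp: axis_def e_eq_iff)
    also have "\<dots> = (if k < n then snd q $ e (Suc k) else 0)"
      by simp
    finally show ?thesis using k by (simp add: totder_def inv_into_e snd_sum partial_y_def)
  qed
  moreover have "fst (totder e n q) = fst ((1::real, 0::real^'n) + (\<Sum>j<n. (snd q $ e (Suc j)) *\<^sub>R partial_y e j))"
    by (simp add: totder_def fst_sum partial_y_def)
  ultimately show ?thesis by (simp add: prod_eq_iff vec_eq_iff)
qed

lemma total_deriv_eq_sum:
  assumes "smooth_on V g" "q \<in> V"
  shows "total_deriv e n g q
    = pderiv_dir (1, 0) g q + (\<Sum>j<n. snd q $ e (Suc j) * pderiv_dir (partial_y e j) g q)"
proof -
  have lin: "linear (frechet_derivative g (at q))"
    using smooth_on_linear_frechet_derivative[OF assms] .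
  show ?thesis
    unfolding total_deriv_def pderiv_dir_def totder_eq_sum
    by (simp add: linear_add[OF lin] linear_sum[OF lin] linear_scale[OF lin] o_def)
qed

lemma has_derivative_total_deriv:
  fixes g :: "real \<times> (real^'n) \<Rightarrow> real"
  assumes V: "open V" "p \<in> V" and sm: "smooth_on V g"
  shows "(total_deriv e n g has_derivative (\<lambda>h. pderiv_dir h (pderiv_dir (1, 0) g) p
      + (\<Sum>j<n. snd p $ e (Suc j) * pderiv_dir h (pderiv_dir (partial_y e j) g) p
               + snd h $ e (Suc j) * pderiv_dir (partial_y e j) g p))) (at p)"
proof -
  have "bounded_linear (\<lambda>q::real \<times> (real^'n). snd q $ e (Suc j))" for j
    by (rule bounded_linear_compose[OF bounded_linear_vec_nth bounded_linear_snd])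
  moreover have "(pderiv_dir v g has_derivative (\<lambda>h. pderiv_dir h (pderiv_dir v g) p)) (at p)" for v
    unfolding pderiv_dir_def[of _ "pderiv_dir v g"]
    using smooth_on_has_derivative[OF smooth_on_pderiv_dir[OF V(1) sm] V(2)] by simp
  ultimately have H: "((\<lambda>q. pderiv_dir (1, 0) g q + (\<Sum>j<n. snd q $ e (Suc j) * pderiv_dir (partial_y e j) g q))
      has_derivative (\<lambda>h. pderiv_dir h (pderiv_dir (1, 0) g) p
        + (\<Sum>j<n. snd p $ e (Suc j) * pderiv_dir h (pderiv_dir (partial_y e j) g) p
                 + snd h $ e (Suc j) * pderiv_dir (partial_y e j) g p))) (at p)"
    by (intro has_derivative_add has_derivative_sum has_derivative_mult
        bounded_linear_imp_has_derivative) auto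
  show ?thesis
    by (rule has_derivative_transform_within_open[OF H V]) (simp add: total_deriv_eq_sum[OF sm])
qed

lemma total_deriv_differentiable:
  assumes "open V" "p \<in> V" "smooth_on V g"
  shows "total_deriv e n g differentiable (at p)"
  using has_derivative_total_deriv[OF assms] unfolding differentiable_def by blast

lemma pderiv_dyn_total_deriv:
  fixes g :: "real \<times> (real^'n) \<Rightarrow> real"
  assumes V: "open V" "p \<in> V" and sm: "smooth_on V g" and "1 \<le> n"
  shows "pderiv_dir (dyn e n) (total_deriv e n g) p
    = pderiv_dir (partial_y e (n - 1)) g p + total_deriv e n (pderiv_dir (dyn e n) g) p"
proof -
  have "(\<Sum>j<n. snd (dyn e n) $ e (Suc j) * pderiv_dir (partial_y e j) g p)
      = (\<Sum>j<n. if j = n - 1 then pderiv_dir (partial_y e j) g p else 0)"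
    using \<open>1 \<le> n\<close> by (intro sum.cong) (auto simp: dyn_def axis_def e_eq_iff)
  then have y_dyn: "(\<Sum>j<n. snd (dyn e n) $ e (Suc j) * pderiv_dir (partial_y e j) g p)
      = pderiv_dir (partial_y e (n - 1)) g p"
    using \<open>1 \<le> n\<close> by simp
  have "pderiv_dir (dyn e n) (total_deriv e n g) p = pderiv_dir (dyn e n) (pderiv_dir (1, 0) g) p
      + (\<Sum>j<n. snd p $ e (Suc j) * pderiv_dir (dyn e n) (pderiv_dir (partial_y e j) g) p
               + snd (dyn e n) $ e (Suc j) * pderiv_dir (partial_y e j) g p)"
    by (simp add: pderiv_dir_def frechet_derivative_at[OF has_derivative_total_deriv[OF V sm], symmetric])
  also have "\<dots> = pderiv_dir (1, 0) (pderiv_dir (dyn e n) g) p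
      + (\<Sum>j<n. snd p $ e (Suc j) * pderiv_dir (partial_y e j) (pderiv_dir (dyn e n) g) p)
      + pderiv_dir (partial_y e (n - 1)) g p"
    unfolding pderiv_dir_commute[OF V sm, of "dyn e n"] sum.distrib y_dyn by simp
  also have "\<dots> = pderiv_dir (partial_y e (n - 1)) g p + total_deriv e n (pderiv_dir (dyn e n) g) p"
    using total_deriv_eq_sum[OF smooth_on_pderiv_dir[OF V(1) sm] V(2)] by simp
  finally show ?thesis .
qed

lemma totder_in_contact_dist: "totder e n p \<in> contact_dist e n p"
  unfolding contact_dist_def totder_def by (auto simp: inv_into_e)

lemma dyn_in_contact_dist: "dyn e n \<in> contact_dist e n p"
  unfolding contact_dist_def dyn_def by (auto simp: axis_def e_eq_iff)

lemma contact_dist_eq_span: "contact_dist e n p = span {totder e n p, dyn e n}"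
proof
  show "span {totder e n p, dyn e n} \<subseteq> contact_dist e n p"
  proof (rule span_minimal)
    show "{totder e n p, dyn e n} \<subseteq> contact_dist e n p"
      using totder_in_contact_dist dyn_in_contact_dist by auto
    show "subspace (contact_dist e n p)"
      unfolding subspace_def contact_dist_def zero_prod_def
      by (simp add: algebra_simps split_beta)
  qed
  show "contact_dist e n p \<subseteq> span {totder e n p, dyn e n}"
  proof
    fix v assume v: "v \<in> contact_dist e n p"
    obtain dx dy where v_eq: "v = (dx, dy)" by (cases v)
    have "dy $ i = (dx *\<^sub>R snd (totder e n p) + (dy $ e n) *\<^sub>R snd (dyn e n)) $ i" for i
    proof -
      obtain k where k: "k \<le> n" "i = e k" using ex_index_e by blast
      then show ?thesis
        using v unfolding v_eq contact_dist_def
        by (cases "k < n") (auto simp: totder_def dyn_def inv_into_e axis_def e_eq_iff mult.commute)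
    qed
    then have "dy = dx *\<^sub>R snd (totder e n p) + (dy $ e n) *\<^sub>R snd (dyn e n)"
      unfolding vec_eq_iff by blast
    then have "v = dx *\<^sub>R totder e n p + (dy $ e n) *\<^sub>R dyn e n"
      using v_eq by (simp add: totder_def dyn_def prod_eq_iff)
    also have "\<dots> \<in> span {totder e n p, dyn e n}"
      by (intro span_add span_scale span_base) auto
    finally show "v \<in> span {totder e n p, dyn e n}" .
  qed
qed

text \<open>\<open>X\<close> and \<open>Y k\<close> play the roles of \<open>x \<circ> \<psi>\<close> and \<open>y\<^sub>k \<circ> \<psi>\<close> for a contact map \<open>\<psi>\<close>.\<close>

context
  fixes V :: "(real \<times> (real^'n)) set"
    and X :: "real \<times> (real^'n) \<Rightarrow> real" and Y :: "nat \<Rightarrow> real \<times> (real^'n) \<Rightarrow> real"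
  assumes V: "open V" and smooth_X: "smooth_on V X" and smooth_Y: "\<And>k. smooth_on V (Y k)"
    and total_rel: "\<And>q k. q \<in> V \<Longrightarrow> k < n \<Longrightarrow>
      total_deriv e n (Y k) q = Y (Suc k) q * total_deriv e n X q"
    and vertical_rel: "\<And>q k. q \<in> V \<Longrightarrow> k < n \<Longrightarrow>
      pderiv_dir (dyn e n) (Y k) q = Y (Suc k) q * pderiv_dir (dyn e n) X q"
begin

lemma pderiv_y_pred_Y:
  assumes q: "q \<in> V" and k: "k < n"
  shows "pderiv_dir (partial_y e (n - 1)) (Y k) q
    = Y (Suc k) q * pderiv_dir (partial_y e (n - 1)) X q
      + (pderiv_dir (dyn e n) (Y (Suc k)) q * total_deriv e n X q
         - total_deriv e n (Y (Suc k)) q * pderiv_dir (dyn e n) X q)"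
proof -
  have n1: "1 \<le> n" using k by simp
  have "pderiv_dir (dyn e n) (total_deriv e n (Y k)) q
      = Y (Suc k) q * pderiv_dir (dyn e n) (total_deriv e n X) q
        + pderiv_dir (dyn e n) (Y (Suc k)) q * total_deriv e n X q"
    using total_rel k
    by (intro pderiv_dir_product_rule_on[OF V q, where g = "Y (Suc k)" and h = "total_deriv e n X"]
        smooth_on_differentiable[OF smooth_Y q] total_deriv_differentiable[OF V q smooth_X]) auto
  moreover have "total_deriv e n (pderiv_dir (dyn e n) (Y k)) q
      = Y (Suc k) q * total_deriv e n (pderiv_dir (dyn e n) X) q
        + total_deriv e n (Y (Suc k)) q * pderiv_dir (dyn e n) X q"
    unfolding total_deriv_def using vertical_rel k
    by (intro pderiv_dir_product_rule_on[OF V q, where g = "Y (Suc k)" and h = "pderiv_dir (dyn e n) X"]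
        smooth_on_differentiable[OF smooth_Y q]
        smooth_on_differentiable[OF smooth_on_pderiv_dir[OF V smooth_X] q]) auto
  ultimately show ?thesis
    using pderiv_dyn_total_deriv[OF V q smooth_Y n1] pderiv_dyn_total_deriv[OF V q smooth_X n1]
    by (simp add: algebra_simps)
qed

lemma pderiv_y_pred_Y_low:
  assumes "q \<in> V" "Suc k < n"
  shows "pderiv_dir (partial_y e (n - 1)) (Y k) q = Y (Suc k) q * pderiv_dir (partial_y e (n - 1)) X q"
  using pderiv_y_pred_Y[OF assms(1)] total_rel[OF assms] vertical_rel[OF assms] assms(2)
  by (simp add: mult_ac)

lemma dyn_X_mult_defect_eq_0:
  assumes "2 \<le> n" and p: "p \<in> V"
  shows "pderiv_dir (dyn e n) X p * (pderiv_dir (dyn e n) (Y n) p * total_deriv e n X p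
    - total_deriv e n (Y n) p * pderiv_dir (dyn e n) X p) = 0"
proof -
  define m where "m = n - 2"
  let ?E = "partial_y e (n - 1)" and ?d = "dyn e n"
  have m: "Suc m < n" "Suc (Suc m) = n" using assms(1) unfolding m_def by auto
  have "pderiv_dir ?d (pderiv_dir ?E (Y m)) p
      = Y (Suc m) p * pderiv_dir ?d (pderiv_dir ?E X) p + pderiv_dir ?d (Y (Suc m)) p * pderiv_dir ?E X p"
    using pderiv_y_pred_Y_low m(1)
    by (intro pderiv_dir_product_rule_on[OF V p, where g = "Y (Suc m)" and h = "pderiv_dir ?E X"]
        smooth_on_differentiable[OF smooth_Y p]
        smooth_on_differentiable[OF smooth_on_pderiv_dir[OF V smooth_X] p]) auto
  moreover have "pderiv_dir ?E (pderiv_dir ?d (Y m)) p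
      = Y (Suc m) p * pderiv_dir ?E (pderiv_dir ?d X) p + pderiv_dir ?E (Y (Suc m)) p * pderiv_dir ?d X p"
    using vertical_rel m(1)
    by (intro pderiv_dir_product_rule_on[OF V p, where g = "Y (Suc m)" and h = "pderiv_dir ?d X"]
        smooth_on_differentiable[OF smooth_Y p]
        smooth_on_differentiable[OF smooth_on_pderiv_dir[OF V smooth_X] p]) auto
  ultimately have "pderiv_dir ?d (Y (Suc m)) p * pderiv_dir ?E X p
      = pderiv_dir ?E (Y (Suc m)) p * pderiv_dir ?d X p"
    using pderiv_dir_commute[OF V p smooth_Y[of m], of ?d ?E]
      pderiv_dir_commute[OF V p smooth_X, of ?d ?E] by algebra
  then show ?thesis
    using pderiv_y_pred_Y[OF p m(1)] vertical_rel[OF p m(1)] unfolding m(2) by algebra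
qed

end

lemma contact_map_vertical_x_eq_0:
  fixes \<psi> :: "real \<times> (real^'n) \<Rightarrow> real \<times> (real^'n)"
  assumes V: "open V" and n: "2 \<le> n" and sm: "smooth_on V \<psi>"
    and contact: "\<And>q. q \<in> V \<Longrightarrow>
      frechet_derivative \<psi> (at q) ` contact_dist e n q \<subseteq> contact_dist e n (\<psi> q)"
    and p: "p \<in> V" and inj: "inj (frechet_derivative \<psi> (at p))"
  shows "fst (frechet_derivative \<psi> (at p) (dyn e n)) = 0"
proof (rule ccontr)
  let ?L = "frechet_derivative \<psi> (at p)"
  let ?X = "\<lambda>q. fst (\<psi> q)" and ?Y = "\<lambda>k q. snd (\<psi> q) $ e k"
  have bounded_Y: "bounded_linear (\<lambda>x::real \<times> (real^'n). snd x $ e k)" for k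
    by (rule bounded_linear_compose[OF bounded_linear_vec_nth bounded_linear_snd])
  have X_deriv: "pderiv_dir v ?X p = fst (?L v)" for v
    using pderiv_dir_compose_bounded_linear[OF bounded_linear_fst smooth_on_differentiable[OF sm p]]
    by (simp add: pderiv_dir_def)
  have Y_deriv: "pderiv_dir v (?Y k) p = snd (?L v) $ e k" for v k
    using pderiv_dir_compose_bounded_linear[OF bounded_Y smooth_on_differentiable[OF sm p]]
    by (simp add: pderiv_dir_def)
  have rel: "pderiv_dir v (?Y k) q = ?Y (Suc k) q * pderiv_dir v ?X q"
    if "q \<in> V" "v \<in> contact_dist e n q" "k < n" for q v k
    by (rule contact_map_component_relation[OF smooth_on_differentiable[OF sm that(1)] _ that(3)])
      (use contact[OF that(1)] that(2) in blast)
  define a where "a = pderiv_dir (dyn e n) ?X p"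
  define b where "b = total_deriv e n ?X p"
  have defect: "a * (pderiv_dir (dyn e n) (?Y n) p * b - total_deriv e n (?Y n) p * a) = 0"
    unfolding a_def b_def
    by (rule dyn_X_mult_defect_eq_0[OF V
          smooth_on_compose_bounded_linear[OF bounded_linear_fst sm]
          smooth_on_compose_bounded_linear[OF bounded_Y sm] _ _ n p])
      (auto simp: total_deriv_def intro!: rel totder_in_contact_dist dyn_in_contact_dist)
  assume "fst (?L (dyn e n)) \<noteq> 0"
  then have "a \<noteq> 0" unfolding a_def X_deriv .
  define w where "w = a *\<^sub>R totder e n p - b *\<^sub>R dyn e n"
  have lin: "linear ?L" by (rule smooth_on_linear_frechet_derivative[OF sm p])
  have "snd (?L w) $ i = 0" for i
  proof -
    obtain k where k: "k \<le> n" "i = e k" using ex_index_e by blast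
    have "snd (?L w) $ i = a * total_deriv e n (?Y k) p - b * pderiv_dir (dyn e n) (?Y k) p"
      unfolding w_def k(2) total_deriv_def Y_deriv
      by (simp add: linear_diff[OF lin] linear_scale[OF lin])
    also have "\<dots> = 0"
    proof (cases "k < n")
      case True
      then show ?thesis
        using rel[OF p totder_in_contact_dist True] rel[OF p dyn_in_contact_dist True]
        unfolding a_def b_def total_deriv_def by (simp add: mult_ac)
    next
      case False
      then show ?thesis using k(1) defect \<open>a \<noteq> 0\<close> by (simp add: mult_ac)
    qed
    finally show ?thesis .
  qed
  moreover have "fst (?L w) = 0"
    unfolding w_def a_def b_def total_deriv_def X_deriv
    by (simp add: linear_diff[OF lin] linear_scale[OF lin])
  ultimately have "?L w = ?L 0"
    by (simp add: prod_eq_iff vec_eq_iff linear_0[OF lin])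
  then have "w = 0" by (rule injD[OF inj])
  moreover have "fst w = a" unfolding w_def by (simp add: totder_def dyn_def)
  ultimately show False using \<open>a \<noteq> 0\<close> by simp
qed

lemma Dist_pushforward_components:
  fixes \<psi> :: "real \<times> (real^'n) \<Rightarrow> real \<times> (real^'n)" and \<mu> :: "real \<times> (real^'n) \<Rightarrow> real"
  assumes P: "(\<psi> has_derivative P) (at p)" and M: "(\<mu> has_derivative M) (at p)"
    and Dist: "frechet_derivative (\<lambda>(p, z). (\<psi> p, \<alpha> * z + \<mu> p)) (at (p, z)) ` Dist e n f1 (p, z)
      = Dist e n f2 (\<psi> p, \<alpha> * z + \<mu> p)"
  shows "P ` contact_dist e n p = contact_dist e n (\<psi> p)"
    and "(P (dyn e n), M (dyn e n)) \<in> span {(totder e n (\<psi> p), f2 (\<psi> p)), (dyn e n, 0)}"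
proof -
  define L where "L = (\<lambda>(v, w). (P v, \<alpha> * w + M v))"
  have L: "((\<lambda>(p, z). (\<psi> p, \<alpha> * z + \<mu> p)) has_derivative L) (at (p, z))"
    unfolding L_def by (rule has_derivative_fibrewise_affine[OF P M])
  have "span {L (totder e n p, f1 p), L (dyn e n, 0)}
      = span {(totder e n (\<psi> p), f2 (\<psi> p)), (dyn e n, 0)}"
    using Dist unfolding frechet_derivative_at[OF L, symmetric] Dist_def Xfield_def Yfield_def
      span_linear_image[OF has_derivative_linear[OF L], symmetric]
    by simp
  then have span_eq: "span {(P (totder e n p), \<alpha> * f1 p + M (totder e n p)), (P (dyn e n), M (dyn e n))}
      = span {(totder e n (\<psi> p), f2 (\<psi> p)), (dyn e n, 0)}"
    unfolding L_def by simp
  then have "span (fst ` {(P (totder e n p), \<alpha> * f1 p + M (totder e n p)), (P (dyn e n), M (dyn e n))})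
      = span (fst ` {(totder e n (\<psi> p), f2 (\<psi> p)), (dyn e n, 0)})"
    unfolding span_linear_image[OF linear_fst] by simp
  then show "P ` contact_dist e n p = contact_dist e n (\<psi> p)"
    unfolding contact_dist_eq_span span_linear_image[OF has_derivative_linear[OF P], symmetric]
    by simp
  show "(P (dyn e n), M (dyn e n)) \<in> span {(totder e n (\<psi> p), f2 (\<psi> p)), (dyn e n, 0)}"
    using span_eq span_base[of "(P (dyn e n), M (dyn e n))"] by blast
qed

end

theorem lemma2p2:
  fixes n :: nat and e :: "nat \<Rightarrow> 'n::finite"
    and f1 f2 :: "real \<times> (real^'n) \<Rightarrow> real"
    and W1 W2 V :: "(real \<times> (real^'n)) set"
    and \<psi> :: "real \<times> (real^'n) \<Rightarrow> real \<times> (real^'n)"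
    and \<mu> :: "real \<times> (real^'n) \<Rightarrow> real"
    and \<alpha> :: real
  assumes "n \<ge> 3" and "CARD('n) = n + 1" and "bij_betw e {..n} UNIV"
    and "open W1" and "open W2"
    and "smooth_on W1 f1" and "smooth_on W2 f2"
    and "\<forall>p\<in>W1. pderiv_dir (dyn e n) (pderiv_dir (dyn e n) f1) p \<noteq> 0"
    and "\<forall>p\<in>W2. pderiv_dir (dyn e n) (pderiv_dir (dyn e n) f2) p \<noteq> 0"
    and "open V" and "V \<subseteq> W1" and "\<psi> ` V \<subseteq> W2"
    and "local_diffeo_on V \<psi>" and "smooth_on V \<mu>" and "\<alpha> \<noteq> 0"
    and "local_diffeo_on (V \<times> UNIV) (\<lambda>(p, z). (\<psi> p, \<alpha> * z + \<mu> p))"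
    and "\<forall>q\<in>V \<times> UNIV.
           frechet_derivative (\<lambda>(p, z). (\<psi> p, \<alpha> * z + \<mu> p)) (at q) ` Dist e n f1 q
           = Dist e n f2 ((\<lambda>(p, z). (\<psi> p, \<alpha> * z + \<mu> p)) q)"
  shows "contact_transformation_on e n V \<psi> \<and> (\<forall>p\<in>V. pderiv_dir (dyn e n) \<mu> p = 0)"
proof -
  have smooth_\<psi>: "smooth_on V \<psi>" and inj: "\<And>p. p \<in> V \<Longrightarrow> inj (frechet_derivative \<psi> (at p))"
    using assms(13) unfolding local_diffeo_on_def by (auto intro: bij_is_inj)
  have pushforward: "frechet_derivative \<psi> (at p) ` contact_dist e n p = contact_dist e n (\<psi> p)"
    "(frechet_derivative \<psi> (at p) (dyn e n), frechet_derivative \<mu> (at p) (dyn e n))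
      \<in> span {(totder e n (\<psi> p), f2 (\<psi> p)), (dyn e n, 0)}" if p: "p \<in> V" for p
    using Dist_pushforward_components[OF assms(3) smooth_on_has_derivative[OF smooth_\<psi> p]
        smooth_on_has_derivative[OF assms(14) p], of \<alpha> 0 f1 f2] assms(17) p
    by auto
  then have "contact_transformation_on e n V \<psi>"
    using assms(13) unfolding contact_transformation_on_def by blast
  moreover have "pderiv_dir (dyn e n) \<mu> p = 0" if p: "p \<in> V" for p
  proof -
    have "fst (frechet_derivative \<psi> (at p) (dyn e n)) = 0"
      using assms(1) pushforward(1)
      by (intro contact_map_vertical_x_eq_0[OF assms(3,10) _ smooth_\<psi> _ p inj[OF p]]) auto
    then show ?thesis
      using snd_eq_0_of_mem_span_pair[OF pushforward(2)[OF p]]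
      by (simp add: pderiv_dir_def totder_def dyn_def)
  qed
  ultimately show ?thesis by blast
qed

end
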